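(* Let $\mathcal{W}\in\mathbb{R}^{w_1\times\cdots\times w_N}$ with $N\ge 2$. For $n=1,\dots,N$ let $e_n(m)\in\mathbb{Z}_{>0}^N$ denote the shape with $m$ in position $n$ and $1$ in all other positions, and let $\mathbf{1}=(1,\dots,1)$. (i) (CP) If $\mathcal{W}_{i_1\cdots i_N}=\sum_{r=1}^{R}U^{(1)}_{r i_1}\cdots U^{(N)}_{r i_N}$ for some matrices $U^{(n)}\in\mathbb{R}^{R\times w_n}$, then $\mathcal{W}$ admits a SeKron representation with $S=N$, ranks $R_1=R$, $R_2=\cdots=R_{N-1}=1$, and factor shapes $e_n(w_n)$ for the $n$-th factor. (ii) (Tucker) If $\mathcal{W}_{i_1\cdots i_N}=\sum_{r_1,\dots,r_N}\mathcal{G}_{r_1\cdots r_N}U^{(1)}_{i_1r_1}\cdots U^{(N)}_{i_Nr_N}$ for some core $\mathcal{G}\in\mathbb{R}^{R_1^{T}\times\cdots\times R_N^{T}}$ and matrices $U^{(n)}\in\mathbb{R}^{w_n\times R^{T}_n}$, then $\mathcal{W}$ admits a SeKron representation with $S=N+1$, ranks $R_n=R^{T}_n$ ($n=1,\dots,N$), factor shapes $e_n(w_n)$ for the $n$-th factor ($n\le N$) and $\mathbf{1}$ for the $(N+1)$-th factor. (iii) (Tensor Ring, and hence Tensor Train as the case $R^{TR}_1=1$) If $\mathcal{W}_{i_1\cdots i_N}=\sum_{r_1,\dots,r_N}\mathcal{G}^{(1)}_{i_1r_1r_2}\mathcal{G}^{(2)}_{i_2r_2r_3}\cdots\mathcal{G}^{(N)}_{i_Nr_Nr_{N+1}}$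 with $r_{N+1}:=r_1$, for some cores $\mathcal{G}^{(n)}\in\mathbb{R}^{w_n\times R^{TR}_n\times R^{TR}_{n+1}}$ with $R^{TR}_{N+1}=R^{TR}_1$, then $\mathcal{W}$ admits a SeKron representation with $S=N+1$, ranks $R_n=R^{TR}_n$ ($n=1,\dots,N$), factor shape $\mathbf{1}$ for the first factor and $e_n(w_n)$ for the $(n+1)$-th factor ($n=1,\dots,N$).
   Context: Indices are 0-based. Kronecker product of tensors $\mathcal{A}\in\mathbb{R}^{a_1\times\cdots\times a_N}$, $\mathcal{B}\in\mathbb{R}^{b_1\times\cdots\times b_N}$: $(\mathcal{A}\otimes\mathcal{B})_{i_1\cdots i_N}=\mathcal{A}_{j_1\cdots j_N}\mathcal{B}_{k_1\cdots k_N}$, $j_n=\lfloor i_n/b_n\rfloor$, $k_n=i_n\bmod b_n$; it is associative and bilinear. A SeKron representation of $\mathcal{W}$ with sequence length $S$, ranks $R_1,\dots,R_{S-1}$ and factor shapes $(a^{(k)}_1,\dots,a^{(k)}_N)$, $k=1,\dots,S$ (with $\prod_k a^{(k)}_n=w_n$), is an identity $\mathcal{W}=\sum_{r_1=1}^{R_1}\cdots\sum_{r_{S-1}=1}^{R_{S-1}}\mathcal{A}^{(1)}_{r_1}\otimes\mathcal{A}^{(2)}_{r_1r_2}\otimes\cdots\otimes\mathcal{A}^{(S-1)}_{r_1\cdots r_{S-1}}\otimes\mathcal{A}^{(S)}_{r_1\cdots r_{S-1}}$ with $\mathcal{A}^{(k)}_{\cdots}\in\mathbb{R}^{a^{(k)}_1\times\cdots\times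 a^{(k)}_N}$. *)

theory Defs
  imports Complex_Main
begin

text \<open>An order-N real tensor of shape w (a list of length N) is a function on
  0-based index lists; only indices within bounds matter.\<close>
type_synonym tensor = "nat list \<Rightarrow> real"

definition in_bounds :: "nat list \<Rightarrow> nat list \<Rightarrow> bool" where
  "in_bounds w i \<longleftrightarrow> length i = length w \<and> (\<forall>n<length w. i ! n < w ! n)"

definition kron :: "nat list \<Rightarrow> tensor \<Rightarrow> tensor \<Rightarrow> tensor" where
  "kron bs A B = (\<lambda>i. A (map2 (div) i bs) * B (map2 (mod) i bs))"

fun kronl :: "(nat list \<times> tensor) list \<Rightarrow> nat list \<times> tensor" where
  "kronl [] = ([], (\<lambda>_. 1))"
| "kronl [x] = x"
| "kronl (x # xs) = (let (s, B) = kronl xs in (map2 (*) (fst x) s, kron s (snd x) B))"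

text \<open>Rank tuples (r_1,...,r_m) stored 0-based: r_j < R j (ranks indexed from 1).\<close>
definition rank_tuples :: "(nat \<Rightarrow> nat) \<Rightarrow> nat \<Rightarrow> nat list set" where
  "rank_tuples R m = {rs. length rs = m \<and> (\<forall>j<m. rs ! j < R (Suc j))}"

text \<open>SeKron representation of W (shape w) with sequence length S, ranks R 1..R (S-1)
  and factor shapes a 1..a S.\<close>
definition has_sekron ::
  "nat list \<Rightarrow> tensor \<Rightarrow> nat \<Rightarrow> (nat \<Rightarrow> nat) \<Rightarrow> (nat \<Rightarrow> nat list) \<Rightarrow> bool" where
  "has_sekron w W S R a \<longleftrightarrow>
     1 \<le> S \<and>
     (\<forall>k\<in>{1..S}. length (a k) = length w) \<and>
     (\<forall>n<length w. (\<Prod>k=1..S. a k ! n) = w ! n) \<and>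
     (\<exists>A :: nat \<Rightarrow> nat list \<Rightarrow> tensor.
        \<forall>i. in_bounds w i \<longrightarrow>
          W i = (\<Sum>rs\<in>rank_tuples R (S - 1).
                   snd (kronl (map (\<lambda>k. (a k, A k (take (min k (S - 1)) rs))) [1..<S + 1])) i))"

definition e_shape :: "nat \<Rightarrow> nat \<Rightarrow> nat \<Rightarrow> nat list" where
  "e_shape N n m = map (\<lambda>j. if Suc j = n then m else 1) [0..<N]"

end

theory Submission
  imports Defs "HOL-Library.Disjoint_Sets"
begin

text \<open>If in every mode at most one factor of a Kronecker product has size different from 1, the
  product has no mixed-radix carries: the factor owning mode n sees the index i_n itself and all other factors see
  index 0 there, so an entry of the product is simply the product of the factors' entries at
  i mod (factor shape). Each of CP, Tucker and Tensor Ring puts its n-th factor matrix or core into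
  a factor of shape e_n(w_n), which owns mode n alone, and carries the remaining coupling (the CP
  component, the Tucker core, the closing rank of the ring) in the rank indices; summing over rank
  prefixes then reproduces the defining sum of the decomposition.\<close>

definition nontrivial_modes :: "nat list \<Rightarrow> nat set" where
  "nontrivial_modes s = {n. n < length s \<and> s ! n \<noteq> 1}"

lemma kronl_shape:
  assumes "xs \<noteq> []" and "\<forall>x\<in>set xs. length (fst x) = N"
  shows "length (fst (kronl xs)) = N \<and>
         (\<forall>n<N. fst (kronl xs) ! n = (\<Prod>x\<leftarrow>xs. fst x ! n))"
  using assms
proof (induction xs rule: kronl.induct)
  case (3 x y zs)
  then show ?case by (auto split: prod.split)
qed simp_all

lemma disjoint_nontrivial_modes_Cons:
  assumes disj:
    "disjoint_family_on (\<lambda>j. nontrivial_modes (f ((x # xs) ! j))) {..<Suc (length xs)}"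
  shows "disjoint_family_on (\<lambda>j. nontrivial_modes (f (xs ! j))) {..<length xs}"
    and "n \<in> nontrivial_modes (f x) \<Longrightarrow> t \<in> set xs \<Longrightarrow> n \<notin> nontrivial_modes (f t)"
proof -
  show "disjoint_family_on (\<lambda>j. nontrivial_modes (f (xs ! j))) {..<length xs}"
    unfolding disjoint_family_on_def
  proof (intro ballI impI)
    fix j j' assume "j \<in> {..<length xs}" "j' \<in> {..<length xs}" "j \<noteq> j'"
    then show "nontrivial_modes (f (xs ! j)) \<inter> nontrivial_modes (f (xs ! j')) = {}"
      using disjoint_family_onD[OF disj, of "Suc j" "Suc j'"] by simp
  qed
  assume "n \<in> nontrivial_modes (f x)" "t \<in> set xs"
  moreover obtain j where "j < length xs" "t = xs ! j"
    using \<open>t \<in> set xs\<close> by (metis in_set_conv_nth)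
  ultimately show "n \<notin> nontrivial_modes (f t)"
    using disjoint_family_onD[OF disj, of 0 "Suc j"] by auto
qed

lemma div_eq_mod_if_trivial_factor:
  fixes i x s :: nat
  assumes "i < x * s" and "x = 1 \<or> s = 1"
  shows "i div s = i mod x"
  using assms by auto

lemma map2_mod_mod_dvd:
  fixes i a b :: "nat list"
  assumes "length a = length i" and "length b = length i" and "\<forall>n<length i. b ! n dvd a ! n"
  shows "map2 (mod) (map2 (mod) i a) b = map2 (mod) i b"
  using assms by (auto intro!: nth_equalityI simp: mod_mod_cancel)

lemma kronl_apply_disjoint:
  assumes "xs \<noteq> []" and "\<forall>x\<in>set xs. length (fst x) = length i"
    and "disjoint_family_on (\<lambda>j. nontrivial_modes (fst (xs ! j))) {..<length xs}"
    and "\<forall>n<length i. i ! n < fst (kronl xs) ! n"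
  shows "snd (kronl xs) i = (\<Prod>x\<leftarrow>xs. snd x (map2 (mod) i (fst x)))"
  using assms
proof (induction xs arbitrary: i rule: kronl.induct)
  case (2 x)
  have "map2 (mod) i (fst x) = i"
    by (rule nth_equalityI) (use 2 in auto)
  then show ?case by simp
next
  case (3 x y zs)
  let ?N = "length i"
  obtain s B where sB: "kronl (y # zs) = (s, B)" by fastforce
  have s: "length s = ?N" "\<forall>n<?N. s ! n = (\<Prod>t\<leftarrow>y # zs. fst t ! n)"
    using kronl_shape[of "y # zs" ?N] "3.prems"(2) sB by auto
  have lens: "length (fst t) = ?N" if "t \<in> set (x # y # zs)" for t
    using "3.prems"(2) that by blast
  have bound: "i ! n < fst x ! n * s ! n" if "n < ?N" for n
    using "3.prems"(4) that s(1) lens sB by auto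
  have disj:
      "disjoint_family_on (\<lambda>j. nontrivial_modes (fst ((y # zs) ! j))) {..<length (y # zs)}"
    and owned: "\<And>n t. n \<in> nontrivial_modes (fst x) \<Longrightarrow> t \<in> set (y # zs) \<Longrightarrow>
                       n \<notin> nontrivial_modes (fst t)"
    using disjoint_nontrivial_modes_Cons[of fst x "y # zs"] "3.prems"(3) by simp_all
  have trivial: "s ! n = 1" if n: "n < ?N" and "fst x ! n \<noteq> 1" for n
  proof -
    have "\<forall>t\<in>set (y # zs). fst t ! n = 1"
      using owned that lens unfolding nontrivial_modes_def by fastforce
    then show "s ! n = 1" using s(2) n by (simp cong: map_cong add: map_replicate_const)
  qed
  have head: "map2 (div) i s = map2 (mod) i (fst x)"
  proof (rule nth_equalityI)
    fix n assume "n < length (map2 (div) i s)"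
    then have n: "n < ?N" using s(1) by simp
    have "i ! n div s ! n = i ! n mod fst x ! n"
      using div_eq_mod_if_trivial_factor[OF bound[OF n]] trivial[OF n] by blast
    then show "map2 (div) i s ! n = map2 (mod) i (fst x) ! n" using n s(1) lens[of x] by simp
  qed (use s(1) lens[of x] in simp)
  have "s ! n > 0" if "n < ?N" for n using bound[OF that] by (cases "s ! n") auto
  then have "B (map2 (mod) i s) = (\<Prod>t\<leftarrow>y # zs. snd t (map2 (mod) (map2 (mod) i s) (fst t)))"
    using "3.IH"[of "map2 (mod) i s"] "3.prems"(2) disj sB s(1) by simp
  also have "\<dots> = (\<Prod>t\<leftarrow>y # zs. snd t (map2 (mod) i (fst t)))"
  proof (rule arg_cong[where f = prod_list], rule map_cong)
    fix t assume t: "t \<in> set (y # zs)"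
    have "fst t ! n dvd s ! n" if n: "n < ?N" for n
      unfolding s(2)[rule_format, OF n] by (rule prod_list_dvd) (use t in auto)
    then show "snd t (map2 (mod) (map2 (mod) i s) (fst t)) = snd t (map2 (mod) i (fst t))"
      using map2_mod_mod_dvd s(1) lens t by simp
  qed simp
  finally show ?case using sB head by (simp add: kron_def)
qed simp

lemma prod_list_map_upt_eq_prod:
  "(\<Prod>k\<leftarrow>[m..<Suc n]. f k) = (\<Prod>k=m..n. f k)"
proof -
  have "(\<Prod>k\<leftarrow>[m..<Suc n]. f k) = prod f (set [m..<Suc n])"
    by (rule prod.distinct_set_conv_list[symmetric]) simp
  then show ?thesis by (simp only: set_upt atLeastLessThanSuc_atLeastAtMost)
qed

lemma kronl_map_upt_apply:
  assumes S: "1 \<le> S"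
    and len: "\<And>k. k \<in> {1..S} \<Longrightarrow> length (a k) = length i"
    and disj: "disjoint_family_on (\<lambda>k. nontrivial_modes (a k)) {1..S}"
    and bound: "\<And>n. n < length i \<Longrightarrow> i ! n < (\<Prod>k=1..S. a k ! n)"
  shows "snd (kronl (map (\<lambda>k. (a k, B k)) [1..<S + 1])) i = (\<Prod>k=1..S. B k (map2 (mod) i (a k)))"
proof -
  define xs where "xs = map (\<lambda>k. (a k, B k)) [1..<S + 1]"
  have xs_nth: "fst (xs ! j) = a (Suc j)" if "j < length xs" for j
    using that unfolding xs_def by (simp del: upt_Suc)
  have "xs \<noteq> []" using S unfolding xs_def by simp
  moreover have lens: "\<forall>x\<in>set xs. length (fst x) = length i"
    using len unfolding xs_def by auto
  moreover have "disjoint_family_on (\<lambda>j. nontrivial_modes (fst (xs ! j))) {..<length xs}"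
    using disj unfolding disjoint_family_on_def
    by (simp add: xs_nth) (simp add: xs_def)
  moreover have "\<forall>n<length i. i ! n < fst (kronl xs) ! n"
  proof (intro allI impI)
    fix n assume n: "n < length i"
    have "fst (kronl xs) ! n = (\<Prod>k\<leftarrow>[1..<Suc S]. a k ! n)"
      using kronl_shape[OF \<open>xs \<noteq> []\<close> lens] n unfolding xs_def by (simp add: comp_def)
    then show "i ! n < fst (kronl xs) ! n"
      using bound[OF n] by (simp add: prod_list_map_upt_eq_prod del: upt_Suc)
  qed
  ultimately have "snd (kronl xs) i = (\<Prod>x\<leftarrow>xs. snd x (map2 (mod) i (fst x)))"
    by (rule kronl_apply_disjoint)
  then show ?thesis
    unfolding xs_def by (simp add: comp_def prod_list_map_upt_eq_prod del: upt_Suc)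
qed

lemma has_sekronI:
  assumes S: "1 \<le> S"
    and len: "\<And>k. k \<in> {1..S} \<Longrightarrow> length (a k) = length w"
    and shape: "\<And>n. n < length w \<Longrightarrow> (\<Prod>k=1..S. a k ! n) = w ! n"
    and disj: "disjoint_family_on (\<lambda>k. nontrivial_modes (a k)) {1..S}"
    and W: "\<And>i. in_bounds w i \<Longrightarrow> W i = (\<Sum>rs\<in>rank_tuples R (S - 1).
              \<Prod>k=1..S. A k (take (min k (S - 1)) rs) (map2 (mod) i (a k)))"
  shows "has_sekron w W S R a"
  unfolding has_sekron_def
proof (intro conjI exI[of _ A] allI impI)
  fix i assume i: "in_bounds w i"
  then have "snd (kronl (map (\<lambda>k. (a k, A k (take (min k (S - 1)) rs))) [1..<S + 1])) i
          = (\<Prod>k=1..S. A k (take (min k (S - 1)) rs) (map2 (mod) i (a k)))" for rs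
    using S len shape disj by (intro kronl_map_upt_apply) (auto simp: in_bounds_def)
  then show "W i = (\<Sum>rs\<in>rank_tuples R (S - 1).
                 snd (kronl (map (\<lambda>k. (a k, A k (take (min k (S - 1)) rs))) [1..<S + 1])) i)"
    using W[OF i] by simp
qed (use S len shape in auto)

lemma e_shape_length [simp]: "length (e_shape N k m) = N"
  by (simp add: e_shape_def)

lemma e_shape_nth [simp]: "n < N \<Longrightarrow> e_shape N k m ! n = (if Suc n = k then m else 1)"
  by (simp add: e_shape_def)

lemma prod_e_shape_nth:
  assumes "n < N"
  shows "(\<Prod>k=1..N. e_shape N k (f k) ! n) = f (Suc n)"
proof -
  have "(\<Prod>k=1..N. e_shape N k (f k) ! n) = (\<Prod>k\<in>{1..N}. if k = Suc n then f k else 1)"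
    using assms by (intro prod.cong) auto
  also have "\<dots> = f (Suc n)" using assms by (simp add: prod.delta)
  finally show ?thesis .
qed

lemma map2_mod_e_shape_nth:
  assumes "in_bounds w i" and "1 \<le> k" and "k \<le> length w"
  shows "map2 (mod) i (e_shape (length w) k (w ! (k - 1))) ! (k - 1) = i ! (k - 1)"
  using assms by (simp add: in_bounds_def)

lemma sum_rank_tuples_first_rank:
  assumes "1 \<le> m"
  shows "(\<Sum>rs\<in>rank_tuples (\<lambda>k. if k = 1 then R else 1) m. f (rs ! 0)) = (\<Sum>r<R. f r)"
proof (rule sum.reindex_bij_witness[of _ "\<lambda>r. r # replicate (m - 1) 0" "\<lambda>rs. rs ! 0"])
  fix rs assume "rs \<in> rank_tuples (\<lambda>k. if k = 1 then R else 1) m"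
  then have len: "length rs = m" and bound: "\<forall>j<m. rs ! j < (if j = 0 then R else 1)"
    unfolding rank_tuples_def by auto
  show "rs ! 0 \<in> {..<R}" using bound assms by auto
  show "rs ! 0 # replicate (m - 1) 0 = rs"
    by (rule nth_equalityI) (use len bound assms in \<open>auto simp: nth_Cons'\<close>)
next
  fix r assume "r \<in> {..<R}"
  then show "r # replicate (m - 1) 0 \<in> rank_tuples (\<lambda>k. if k = 1 then R else 1) m"
    unfolding rank_tuples_def using assms by (auto simp: nth_Cons')
qed simp_all

lemma has_sekron_cp:
  assumes N: "2 \<le> N" and w: "length w = N"
    and W: "\<forall>i. in_bounds w i \<longrightarrow> W i = (\<Sum>r<R. \<Prod>n=1..N. U n r (i ! (n - 1)))"
  shows "has_sekron w W N (\<lambda>k. if k = 1 then R else 1) (\<lambda>k. e_shape N k (w ! (k - 1)))"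
proof -
  define a where "a = (\<lambda>k. e_shape N k (w ! (k - 1)))"
  define A where "A = (\<lambda>k rs idx. U k (rs ! 0) (idx ! (k - 1)))"
  have entries: "(\<Prod>k=1..N. A k (take (min k (N - 1)) rs) (map2 (mod) i (a k)))
                   = (\<Prod>k=1..N. U k (rs ! 0) (i ! (k - 1)))"
    if i: "in_bounds w i" for i rs
    unfolding A_def a_def using map2_mod_e_shape_nth[OF i] N w by (intro prod.cong) auto
  have "has_sekron w W N (\<lambda>k. if k = 1 then R else 1) a"
  proof (rule has_sekronI[where A = A])
    show "disjoint_family_on (\<lambda>k. nontrivial_modes (a k)) {1..N}"
      unfolding a_def disjoint_family_on_def nontrivial_modes_def by (auto split: if_splits)
    fix i assume i: "in_bounds w i"
    have "W i = (\<Sum>r<R. \<Prod>k=1..N. U k r (i ! (k - 1)))" using W i by simp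
    also have "\<dots> = (\<Sum>rs\<in>rank_tuples (\<lambda>k. if k = 1 then R else 1) (N - 1).
                       \<Prod>k=1..N. U k (rs ! 0) (i ! (k - 1)))"
      using N by (intro sum_rank_tuples_first_rank[symmetric]) simp
    finally show "W i = (\<Sum>rs\<in>rank_tuples (\<lambda>k. if k = 1 then R else 1) (N - 1).
                           \<Prod>k=1..N. A k (take (min k (N - 1)) rs) (map2 (mod) i (a k)))"
      using entries[OF i] by simp
  qed (use N w in \<open>auto simp: a_def prod_e_shape_nth\<close>)
  then show ?thesis unfolding a_def .
qed

lemma has_sekron_tucker:
  assumes w: "length w = N"
    and W: "\<forall>i. in_bounds w i \<longrightarrow>
              W i = (\<Sum>rs\<in>rank_tuples RT N. G rs * (\<Prod>n=1..N. U n (i ! (n - 1)) (rs ! (n - 1))))"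
  shows "has_sekron w W (N + 1) RT (\<lambda>k. if k \<le> N then e_shape N k (w ! (k - 1)) else replicate N 1)"
proof -
  define a where "a = (\<lambda>k. if k \<le> N then e_shape N k (w ! (k - 1)) else replicate N 1)"
  define A where "A = (\<lambda>k rs idx. if k \<le> N then U k (idx ! (k - 1)) (rs ! (k - 1)) else G rs)"
  have shape: "(\<Prod>k=1..N + 1. a k ! n) = w ! n" if "n < length w" for n
  proof -
    have "(\<Prod>k=1..N. a k ! n) = (\<Prod>k=1..N. e_shape N k (w ! (k - 1)) ! n)"
      unfolding a_def by (intro prod.cong) auto
    then show ?thesis using that w by (simp add: a_def prod_e_shape_nth)
  qed
  have entries: "(\<Prod>k=1..N + 1. A k (take (min k N) rs) (map2 (mod) i (a k)))
                   = G rs * (\<Prod>n=1..N. U n (i ! (n - 1)) (rs ! (n - 1)))"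
    if i: "in_bounds w i" and rs: "length rs = N" for i rs
  proof -
    have "(\<Prod>k=1..N. A k (take (min k N) rs) (map2 (mod) i (a k)))
            = (\<Prod>n=1..N. U n (i ! (n - 1)) (rs ! (n - 1)))"
      unfolding A_def a_def using map2_mod_e_shape_nth[OF i] w by (intro prod.cong) auto
    then show ?thesis using rs by (simp add: A_def)
  qed
  have "has_sekron w W (N + 1) RT a"
  proof (rule has_sekronI[where A = A])
    show "disjoint_family_on (\<lambda>k. nontrivial_modes (a k)) {1..N + 1}"
      unfolding a_def disjoint_family_on_def nontrivial_modes_def by (auto split: if_splits)
    fix i assume "in_bounds w i"
    then show "W i = (\<Sum>rs\<in>rank_tuples RT (N + 1 - 1).
                 \<Prod>k=1..N + 1. A k (take (min k (N + 1 - 1)) rs) (map2 (mod) i (a k)))"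
      using W entries by (auto simp: rank_tuples_def intro!: sum.cong)
  qed (use w shape in \<open>auto simp: a_def\<close>)
  then show ?thesis unfolding a_def .
qed

lemma has_sekron_tensor_ring:
  assumes w: "length w = N"
    and W: "\<forall>i. in_bounds w i \<longrightarrow>
              W i = (\<Sum>rs\<in>rank_tuples RT N.
                       \<Prod>n=1..N. G n (i ! (n - 1)) (rs ! (n - 1)) (if n = N then rs ! 0 else rs ! n))"
  shows "has_sekron w W (N + 1) RT
           (\<lambda>k. if k = 1 then replicate N 1 else e_shape N (k - 1) (w ! (k - 2)))"
proof -
  define a where "a = (\<lambda>k. if k = 1 then replicate N 1 else e_shape N (k - 1) (w ! (k - 2)))"
  define A where "A = (\<lambda>k rs idx. if k = 1 then 1
                         else G (k - 1) (idx ! (k - 2)) (rs ! (k - 2))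
                                (if k - 1 = N then rs ! 0 else rs ! (k - 1)))"
  have split_first: "(\<Prod>k=1..N + 1. f k) = f 1 * (\<Prod>k=1..N. f (Suc k))"
    for f :: "nat \<Rightarrow> 'b::comm_monoid_mult"
    by (simp add: prod.atLeast_Suc_atMost_Suc_shift prod.atLeast_Suc_atMost[of 0]
             del: prod.cl_ivl_Suc)
  have shape: "(\<Prod>k=1..N + 1. a k ! n) = w ! n" if "n < length w" for n
  proof -
    have "(\<Prod>k=1..N + 1. a k ! n) = a 1 ! n * (\<Prod>k=1..N. a (Suc k) ! n)"
      by (rule split_first)
    also have "\<dots> = (\<Prod>k=1..N. e_shape N k (w ! (k - 1)) ! n)"
      using that w unfolding a_def by (simp add: numeral_2_eq_2)
    also have "\<dots> = w ! n" using that w by (simp add: prod_e_shape_nth)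
    finally show ?thesis .
  qed
  have entries: "(\<Prod>k=1..N + 1. A k (take (min k N) rs) (map2 (mod) i (a k)))
                   = (\<Prod>n=1..N. G n (i ! (n - 1)) (rs ! (n - 1)) (if n = N then rs ! 0 else rs ! n))"
    if i: "in_bounds w i" and rs: "length rs = N" for i rs
  proof -
    have "(\<Prod>k=1..N + 1. A k (take (min k N) rs) (map2 (mod) i (a k)))
            = (\<Prod>k=1..N. A (Suc k) (take (min (Suc k) N) rs) (map2 (mod) i (a (Suc k))))"
      by (subst split_first) (simp add: A_def)
    also have "\<dots> = (\<Prod>n=1..N. G n (i ! (n - 1)) (rs ! (n - 1)) (if n = N then rs ! 0 else rs ! n))"
      unfolding A_def a_def using map2_mod_e_shape_nth[OF i] w rs
      by (intro prod.cong) (auto simp: numeral_2_eq_2)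
    finally show ?thesis .
  qed
  have "has_sekron w W (N + 1) RT a"
  proof (rule has_sekronI[where A = A])
    show "disjoint_family_on (\<lambda>k. nontrivial_modes (a k)) {1..N + 1}"
      unfolding a_def disjoint_family_on_def nontrivial_modes_def by (auto split: if_splits)
    fix i assume "in_bounds w i"
    then show "W i = (\<Sum>rs\<in>rank_tuples RT (N + 1 - 1).
                 \<Prod>k=1..N + 1. A k (take (min k (N + 1 - 1)) rs) (map2 (mod) i (a k)))"
      using W entries by (auto simp: rank_tuples_def intro!: sum.cong)
  qed (use w shape in \<open>auto simp: a_def\<close>)
  then show ?thesis unfolding a_def .
qed

theorem theorem2:
  fixes N :: nat and w :: "nat list" and W :: tensor
  assumes "N \<ge> 2" and "length w = N"
  shows
   "(\<forall>(R::nat) (U :: nat \<Rightarrow> nat \<Rightarrow> nat \<Rightarrow> real).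
      (\<forall>i. in_bounds w i \<longrightarrow> W i = (\<Sum>r<R. \<Prod>n=1..N. U n r (i ! (n - 1))))
      \<longrightarrow> has_sekron w W N (\<lambda>k. if k = 1 then R else 1)
             (\<lambda>k. e_shape N k (w ! (k - 1))))
  \<and> (\<forall>(RT :: nat \<Rightarrow> nat) (G :: tensor) (U :: nat \<Rightarrow> nat \<Rightarrow> nat \<Rightarrow> real).
      (\<forall>i. in_bounds w i \<longrightarrow>
          W i = (\<Sum>rs\<in>rank_tuples RT N. G rs * (\<Prod>n=1..N. U n (i ! (n - 1)) (rs ! (n - 1)))))
      \<longrightarrow> has_sekron w W (N + 1) RT
             (\<lambda>k. if k \<le> N then e_shape N k (w ! (k - 1)) else replicate N 1))
  \<and> (\<forall>(RT :: nat \<Rightarrow> nat) (G :: nat \<Rightarrow> nat \<Rightarrow> nat \<Rightarrow> nat \<Rightarrow> real).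
      RT (N + 1) = RT 1 \<longrightarrow>
      (\<forall>i. in_bounds w i \<longrightarrow>
          W i = (\<Sum>rs\<in>rank_tuples RT N.
                  \<Prod>n=1..N. G n (i ! (n - 1)) (rs ! (n - 1)) (if n = N then rs ! 0 else rs ! n)))
      \<longrightarrow> has_sekron w W (N + 1) RT
             (\<lambda>k. if k = 1 then replicate N 1 else e_shape N (k - 1) (w ! (k - 2))))"
  using has_sekron_cp[OF assms] has_sekron_tucker[OF assms(2)] has_sekron_tensor_ring[OF assms(2)]
  by blast

end
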